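(* Let $I=(0,1)$. For every integer $k\ge1$ and every $0<s<1$, \[BV(I)\sim BGV^k(I)\sim BGV^{k+s}(I),\] namely the three function spaces are topologically equivalent.
   Context: For $r=k+s$ with $k\in\mathbb N$, $0\le s<1$ and $\alpha\in(0,\infty)^{k+1}$, $BGV^{r}_\alpha(I)=\{u\in L^1(I): |u|_{TGV^{r}_\alpha(I)}<\infty\}$ with norm $\|u\|_{L^1(I)}+|u|_{TGV^r_\alpha(I)}$, and $BGV^r(I)$ denotes $BGV^r_\alpha(I)$ for some $\alpha$ (membership does not depend on $\alpha$). Here, with $|\mu|_{\mathcal M_b}$ the total variation of a measure, $u'$ the distributional derivative, and $|v|_{W^{s,p}(I)}=(\int_I\int_I|v(x)-v(y)|^p|x-y|^{-1-sp}dxdy)^{1/p}$: integer order $|u|_{TGV^1_\beta}=\beta_0|u'|_{\mathcal M_b}$, and $|u|_{TGV^{m+1}_\beta}=\inf\{\beta_0|u'-v_0|_{\mathcal M_b}+\beta_1|v_0'-v_1|_{\mathcal M_b}+\dots+\beta_{m-1}|v_{m-2}'-v_{m-1}|_{\mathcal M_b}+\beta_m|v_{m-1}'|_{\mathcal M_b}: v_i\in BV(I)\}$; fractional order ($0<s<1$): $|u|_{TGV^{1+s}_\alpha}=\inf\{\alpha_0|u'-sv_0|_{\mathcal M_b}+\alpha_1s(1-s)|v_0|_{W^{s,1+s(1-s)}}+\alpha_0s(1-s)|\int_Iv_0|: v_0\in W^{s,1+s(1-s)}(I)\}$ and for $k>1$, $|u|_{TGV^{k+s}_\alpha}=\inf\{\alpha_0|u'-v_0|_{\mathcal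 M_b}+\dots+\alpha_{k-1}|v_{k-2}'-sv_{k-1}|_{\mathcal M_b}+\alpha_ks(1-s)|v_{k-1}|_{W^{s,1+s(1-s)}}+\alpha_{k-1}s(1-s)|\int_Iv_{k-1}|: v_i\in BV(I), v_{k-1}\in W^{s,1+s(1-s)}(I)\}$. *)

theory Defs
  imports "HOL-Analysis.Analysis"
begin

definition I01 :: "real set" where "I01 = {0<..<1}"

definition test_fns :: "(real \<Rightarrow> real) set" where
  "test_fns = {\<phi>. \<phi> C1_differentiable_on UNIV \<and>
      (\<exists>a b. 0 < a \<and> a \<le> b \<and> b < 1 \<and> (\<forall>x. x \<notin> {a..b} \<longrightarrow> \<phi> x = 0)) \<and>
      (\<forall>x. \<bar>\<phi> x\<bar> \<le> 1)}"

text \<open>Total variation of the distribution u' - v on I (|u' - v|_{M_b}), as the dual norm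
  against test functions; equals +\<infinity> if u' - v is not a finite measure.\<close>
definition dtv :: "(real \<Rightarrow> real) \<Rightarrow> (real \<Rightarrow> real) \<Rightarrow> ereal" where
  "dtv u v = (SUP \<phi>\<in>test_fns. ereal (- (LINT x:I01|lborel. u x * deriv \<phi> x)
                                   - (LINT x:I01|lborel. v x * \<phi> x)))"

definition L1_on :: "(real \<Rightarrow> real) \<Rightarrow> bool" where
  "L1_on u \<longleftrightarrow> set_integrable lborel I01 u"

definition L1_norm :: "(real \<Rightarrow> real) \<Rightarrow> real" where
  "L1_norm u = (LINT x:I01|lborel. \<bar>u x\<bar>)"

definition BV_set :: "(real \<Rightarrow> real) set" where
  "BV_set = {u. L1_on u \<and> dtv u (\<lambda>_. 0) < \<infinity>}"

definition BV_norm :: "(real \<Rightarrow> real) \<Rightarrow> ereal" where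
  "BV_norm u = ereal (L1_norm u) + dtv u (\<lambda>_. 0)"

definition gagliardo :: "real \<Rightarrow> real \<Rightarrow> (real \<Rightarrow> real) \<Rightarrow> ennreal" where
  "gagliardo s p v = (\<integral>\<^sup>+ x\<in>I01. (\<integral>\<^sup>+ y\<in>I01.
      ennreal (\<bar>v x - v y\<bar> powr p / \<bar>x - y\<bar> powr (1 + s * p)) \<partial>lborel) \<partial>lborel)"

definition Wsp_semi :: "real \<Rightarrow> real \<Rightarrow> (real \<Rightarrow> real) \<Rightarrow> ereal" where
  "Wsp_semi s p v = (if gagliardo s p v = \<infinity> then \<infinity>
                     else ereal (enn2real (gagliardo s p v) powr (1 / p)))"

definition in_Wsp :: "real \<Rightarrow> real \<Rightarrow> (real \<Rightarrow> real) \<Rightarrow> bool" where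
  "in_Wsp s p v \<longleftrightarrow> v \<in> borel_measurable lborel \<and>
     (\<integral>\<^sup>+ x\<in>I01. ennreal (\<bar>v x\<bar> powr p) \<partial>lborel) < \<infinity> \<and> gagliardo s p v < \<infinity>"

text \<open>Integer order TGV^k_\<beta> (k \<ge> 1), weights \<beta> 0, ..., \<beta> (k-1).
  The chain is u, v 0, ..., v (k-2), and the last term is |v(k-2)'|.\<close>
definition TGV_int :: "nat \<Rightarrow> (nat \<Rightarrow> real) \<Rightarrow> (real \<Rightarrow> real) \<Rightarrow> ereal" where
  "TGV_int k \<beta> u = (INF v \<in> {v :: nat \<Rightarrow> real \<Rightarrow> real. \<forall>i<k-1. v i \<in> BV_set}.
      (\<Sum>i<k. ereal (\<beta> i) * dtv (if i = 0 then u else v (i - 1))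
                                  (if i = k - 1 then (\<lambda>_. 0) else v i)))"

definition TGV_frac :: "nat \<Rightarrow> real \<Rightarrow> (nat \<Rightarrow> real) \<Rightarrow> (real \<Rightarrow> real) \<Rightarrow> ereal" where
  "TGV_frac k s \<alpha> u = (INF v \<in> {v :: nat \<Rightarrow> real \<Rightarrow> real. (\<forall>i<k-1. v i \<in> BV_set) \<and>
                                   in_Wsp s (1 + s * (1 - s)) (v (k - 1))}.
      (\<Sum>i<k. ereal (\<alpha> i) * dtv (if i = 0 then u else v (i - 1))
                                  (if i = k - 1 then (\<lambda>x. s * v (k - 1) x) else v i))
      + ereal (\<alpha> k * s * (1 - s)) * Wsp_semi s (1 + s * (1 - s)) (v (k - 1))
      + ereal (\<alpha> (k - 1) * s * (1 - s) * \<bar>LINT x:I01|lborel. v (k - 1) x\<bar>))"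

definition BGV_int_set :: "nat \<Rightarrow> (nat \<Rightarrow> real) \<Rightarrow> (real \<Rightarrow> real) set" where
  "BGV_int_set k \<beta> = {u. L1_on u \<and> TGV_int k \<beta> u < \<infinity>}"

definition BGV_int_norm :: "nat \<Rightarrow> (nat \<Rightarrow> real) \<Rightarrow> (real \<Rightarrow> real) \<Rightarrow> ereal" where
  "BGV_int_norm k \<beta> u = ereal (L1_norm u) + TGV_int k \<beta> u"

definition BGV_frac_set :: "nat \<Rightarrow> real \<Rightarrow> (nat \<Rightarrow> real) \<Rightarrow> (real \<Rightarrow> real) set" where
  "BGV_frac_set k s \<alpha> = {u. L1_on u \<and> TGV_frac k s \<alpha> u < \<infinity>}"

definition BGV_frac_norm :: "nat \<Rightarrow> real \<Rightarrow> (nat \<Rightarrow> real) \<Rightarrow> (real \<Rightarrow> real) \<Rightarrow> ereal" where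
  "BGV_frac_norm k s \<alpha> u = ereal (L1_norm u) + TGV_frac k s \<alpha> u"

end

theory Submission
  imports Defs
begin

text \<open>
  The upper bounds \<open>TGV \<le> weight * \<bar>Du\<bar>\<close> come from choosing all auxiliary functions zero.
  For the lower bound, take an admissible chain \<open>u = w 0, w 1, \<dots>, w k\<close> with
  \<open>\<bar>(w i)' - w (i + 1)\<bar>\<close> at most \<open>d i\<close> and with \<open>w k\<close> bounded as a distribution by \<open>B\<close>: in the
  integer case \<open>w k = 0\<close>, in the fractional case \<open>w k = s * v (k - 1)\<close>, which a fractional
  Poincare inequality bounds by its \<open>W^{s,p}\<close> seminorm and its mean. Fix a \<open>C\<^sup>k\<close> bump \<open>\<eta>\<close>
  supported in \<open>I\<close> with positive mean. Every test function splits as \<open>\<phi> = c * \<eta> + \<psi>'\<close> with \<open>c\<close>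
  and \<open>\<psi>\<close> uniformly bounded, so testing \<open>w j\<close> against \<open>\<phi>\<close> costs \<open>d j\<close> plus testing \<open>w (j + 1)\<close>
  against \<open>\<psi>\<close> and \<open>w j\<close> against \<open>\<eta>\<close>; the latter is pushed down the chain, one derivative of
  \<open>\<eta>\<close> per link, to \<open>w 0 \<in> L\<^sup>1\<close>. Descending from \<open>w k\<close> to \<open>w 1\<close> gives
  \<open>\<bar>Du\<bar> \<le> C * (\<parallel>u\<parallel>\<^sub>1 + \<Sum> d i + B)\<close>, and taking the infimum over chains gives the theorem.
\<close>

fun cont_diff :: "nat \<Rightarrow> (real \<Rightarrow> real) \<Rightarrow> bool" where
  "cont_diff 0 f = continuous_on UNIV f"
| "cont_diff (Suc n) f = ((\<forall>x. (f has_real_derivative deriv f x) (at x)) \<and> cont_diff n (deriv f))"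

lemma cont_diff_imp_continuous_on: "continuous_on UNIV f" if "cont_diff n f"
proof (cases n)
  case (Suc m)
  then have "\<forall>x. (f has_real_derivative deriv f x) (at x)" using that by simp
  then show ?thesis by (meson DERIV_isCont continuous_at_imp_continuous_on)
qed (use that in simp)

lemma cont_diff_SucD: "cont_diff (Suc n) f \<Longrightarrow> cont_diff n f"
proof (induction n arbitrary: f)
  case 0
  then show ?case using cont_diff_imp_continuous_on by fastforce
qed auto

lemma cont_diff_add: "cont_diff n f \<Longrightarrow> cont_diff n g \<Longrightarrow> cont_diff n (\<lambda>x. f x + g x)"
proof (induction n arbitrary: f g)
  case (Suc n)
  have d: "((\<lambda>x. f x + g x) has_real_derivative deriv f x + deriv g x) (at x)" for x
    using Suc.prems by (auto intro!: derivative_eq_intros)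
  then have "deriv (\<lambda>x. f x + g x) = (\<lambda>x. deriv f x + deriv g x)"
    using DERIV_imp_deriv by blast
  then show ?case using d Suc by auto
qed (auto intro: continuous_intros)

lemma cont_diff_cmult: "cont_diff n f \<Longrightarrow> cont_diff n (\<lambda>x. c * f x)"
proof (induction n arbitrary: f)
  case (Suc n)
  have d: "((\<lambda>x. c * f x) has_real_derivative c * deriv f x) (at x)" for x
    using Suc.prems by (auto intro!: derivative_eq_intros)
  then have "deriv (\<lambda>x. c * f x) = (\<lambda>x. c * deriv f x)"
    using DERIV_imp_deriv by blast
  then show ?case using d Suc by auto
qed (auto intro: continuous_intros)

lemma cont_diff_mult: "cont_diff n f \<Longrightarrow> cont_diff n g \<Longrightarrow> cont_diff n (\<lambda>x. f x * g x)"
proof (induction n arbitrary: f g)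
  case (Suc n)
  have d: "((\<lambda>x. f x * g x) has_real_derivative deriv f x * g x + f x * deriv g x) (at x)" for x
    using Suc.prems by (auto intro!: derivative_eq_intros)
  then have "deriv (\<lambda>x. f x * g x) = (\<lambda>x. deriv f x * g x + f x * deriv g x)"
    using DERIV_imp_deriv by blast
  moreover have "cont_diff n (\<lambda>x. deriv f x * g x + f x * deriv g x)"
    using Suc cont_diff_SucD cont_diff_add by auto
  ultimately show ?case using d by auto
qed (auto intro: continuous_intros)

lemma cont_diff_affine: "cont_diff n f \<Longrightarrow> cont_diff n (\<lambda>x. f (c * x + d))"
proof (induction n arbitrary: f)
  case 0
  then show ?case by (auto intro!: continuous_on_compose2[of UNIV f] continuous_intros)
next
  case (Suc n)
  have d: "((\<lambda>x. f (c * x + d)) has_real_derivative deriv f (c * x + d) * c) (at x)" for x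
    using Suc.prems by (auto intro!: derivative_eq_intros DERIV_chain2[of f])
  then have "deriv (\<lambda>x. f (c * x + d)) = (\<lambda>x. c * deriv f (c * x + d))"
    using DERIV_imp_deriv by (metis mult.commute)
  then show ?case using d Suc cont_diff_cmult by (auto simp: mult.commute)
qed

lemma cont_diff_iterated_deriv: "cont_diff n f \<Longrightarrow> m \<le> n \<Longrightarrow> cont_diff (n - m) ((deriv ^^ m) f)"
proof (induction m)
  case (Suc m)
  then have "cont_diff (Suc (n - Suc m)) ((deriv ^^ m) f)"
    by (metis Suc_diff_le Suc_leD diff_Suc_Suc)
  then show ?case by simp
qed simp

definition trunc_power :: "nat \<Rightarrow> real \<Rightarrow> real" where
  "trunc_power N x = (max 0 x) ^ N"

lemma trunc_power_has_derivative:
  assumes "N \<ge> 2"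
  shows "(trunc_power N has_real_derivative real N * trunc_power (N - 1) x) (at x)"
proof -
  have zero: "trunc_power (N - 1) 0 = 0" using assms by (simp add: trunc_power_def)
  consider "x < 0" | "x > 0" | "x = 0" by linarith
  then show ?thesis
  proof cases
    case 1
    have "(trunc_power N has_real_derivative 0) (at x)"
      by (rule has_field_derivative_transform_within_open[of "\<lambda>_. 0" _ _ "{..<0}"])
         (use 1 assms in \<open>auto simp: trunc_power_def\<close>)
    then show ?thesis using 1 assms by (simp add: trunc_power_def power_0_left)
  next
    case 2
    have "((\<lambda>x. x ^ N) has_real_derivative real N * x ^ (N - 1)) (at x)"
      by (auto intro!: derivative_eq_intros)
    then have "(trunc_power N has_real_derivative real N * x ^ (N - 1)) (at x)"
      by (rule has_field_derivative_transform_within_open[of _ _ _ "{0<..}"])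
         (use 2 in \<open>auto simp: trunc_power_def\<close>)
    then show ?thesis using 2 by (simp add: trunc_power_def)
  next
    case 3
    have quotient: "(trunc_power N y - trunc_power N 0) / (y - 0) = trunc_power (N - 1) y"
      if "y \<noteq> 0" for y
    proof (cases "y > 0")
      case True
      have "y ^ N = y * y ^ (N - 1)" using assms by (metis Suc_diff_1 not_numeral_le_zero not_gr0 power_Suc)
      then show ?thesis using True assms by (simp add: trunc_power_def power_0_left)
    next
      case False
      then show ?thesis using assms that by (simp add: trunc_power_def max_def)
    qed
    have "((\<lambda>y. trunc_power (N - 1) y) \<longlongrightarrow> trunc_power (N - 1) 0) (at 0)"
      unfolding trunc_power_def by (intro tendsto_intros)
    moreover have "\<forall>\<^sub>F y in at 0. (trunc_power N y - trunc_power N 0) / (y - 0) = trunc_power (N - 1) y"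
      unfolding eventually_at_filter using quotient by (auto intro: always_eventually)
    ultimately have "((\<lambda>y. (trunc_power N y - trunc_power N 0) / (y - 0)) \<longlongrightarrow> 0) (at 0)"
      using zero tendsto_cong by fastforce
    then show ?thesis using 3 zero by (simp add: DERIV_def)
  qed
qed

lemma cont_diff_trunc_power: "n < N \<Longrightarrow> cont_diff n (trunc_power N)"
proof (induction n arbitrary: N)
  case 0
  then show ?case unfolding trunc_power_def by (auto intro!: continuous_intros)
next
  case (Suc n)
  then have N: "N \<ge> 2" by linarith
  have "deriv (trunc_power N) = (\<lambda>x. real N * trunc_power (N - 1) x)"
    using trunc_power_has_derivative[OF N] DERIV_imp_deriv by blast
  then show ?case using Suc cont_diff_cmult trunc_power_has_derivative[OF N] by simp
qed

lemma deriv_vanishes_outside: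
  fixes f :: "real \<Rightarrow> real"
  assumes "\<forall>x. x \<notin> {a..b} \<longrightarrow> f x = 0" and "x \<notin> {a..b}"
  shows "deriv f x = 0"
proof -
  consider "x < a" | "x > b" using assms(2) by fastforce
  then have "(f has_real_derivative 0) (at x)"
  proof cases
    case 1
    show ?thesis
      by (rule has_field_derivative_transform_within_open[of "\<lambda>_. 0" _ _ "{..<a}"])
         (use 1 assms(1) in auto)
  next
    case 2
    show ?thesis
      by (rule has_field_derivative_transform_within_open[of "\<lambda>_. 0" _ _ "{b<..}"])
         (use 2 assms(1) in auto)
  qed
  then show ?thesis by (rule DERIV_imp_deriv)
qed

lemma iterated_deriv_vanishes_outside:
  fixes f :: "real \<Rightarrow> real"
  assumes "\<forall>x. x \<notin> {a..b} \<longrightarrow> f x = 0"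
  shows "\<forall>x. x \<notin> {a..b} \<longrightarrow> (deriv ^^ m) f x = 0"
  by (induction m) (use assms deriv_vanishes_outside in auto)

lemma continuous_vanishing_outside_bounded:
  fixes f :: "real \<Rightarrow> real"
  assumes "continuous_on UNIV f" and "\<forall>x. x \<notin> {a..b} \<longrightarrow> f x = 0"
  shows "bounded (range f)"
proof -
  have "bounded (f ` {a..b})"
    using assms(1) by (intro compact_imp_bounded compact_continuous_image)
      (auto intro: continuous_on_subset)
  moreover have "range f \<subseteq> insert 0 (f ` {a..b})"
  proof
    fix y assume "y \<in> range f"
    then obtain x where "y = f x" by blast
    then show "y \<in> insert 0 (f ` {a..b})" using assms(2) by (cases "x \<in> {a..b}") auto
  qed
  ultimately show ?thesis by (metis bounded_insert bounded_subset)
qed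

definition bump :: "nat \<Rightarrow> real \<Rightarrow> real" where
  "bump k x = trunc_power (Suc k) (x - 1/4) * trunc_power (Suc k) (3/4 - x)"

definition bump_deriv :: "nat \<Rightarrow> nat \<Rightarrow> real \<Rightarrow> real" where
  "bump_deriv k m = (deriv ^^ m) (bump k)"

lemma cont_diff_bump: "cont_diff k (bump k)"
proof -
  have "cont_diff k (\<lambda>x. trunc_power (Suc k) (1 * x + - (1/4)) * trunc_power (Suc k) ((-1) * x + 3/4))"
    by (intro cont_diff_mult cont_diff_affine cont_diff_trunc_power) simp_all
  then show ?thesis by (simp add: bump_def[abs_def])
qed

lemma bump_deriv_0 [simp]: "bump_deriv k 0 = bump k"
  by (simp add: bump_deriv_def)

lemma bump_deriv_has_derivative:
  assumes "m < k"
  shows "(bump_deriv k m has_real_derivative bump_deriv k (Suc m) x) (at x)"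
proof -
  have "cont_diff (Suc (k - Suc m)) ((deriv ^^ m) (bump k))"
    using cont_diff_iterated_deriv[OF cont_diff_bump, of m k] assms by (simp add: Suc_diff_Suc)
  then show ?thesis by (simp add: bump_deriv_def)
qed

lemma continuous_on_bump_deriv: "m \<le> k \<Longrightarrow> continuous_on UNIV (bump_deriv k m)"
  unfolding bump_deriv_def
  using cont_diff_iterated_deriv[OF cont_diff_bump] cont_diff_imp_continuous_on by blast

lemma bump_vanishes_outside: "\<forall>x. x \<notin> {1/4..3/4} \<longrightarrow> bump k x = 0"
  by (auto simp: bump_def trunc_power_def)

lemma bump_deriv_vanishes_outside: "\<forall>x. x \<notin> {1/4..3/4} \<longrightarrow> bump_deriv k m x = 0"
  unfolding bump_deriv_def by (rule iterated_deriv_vanishes_outside[OF bump_vanishes_outside])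

lemma bump_derivs_bounded: "\<exists>K>0. \<forall>m\<le>k. \<forall>x. \<bar>bump_deriv k m x\<bar> \<le> K"
proof -
  have "bounded (\<Union>m\<le>k. range (bump_deriv k m))"
    using continuous_vanishing_outside_bounded[OF continuous_on_bump_deriv bump_deriv_vanishes_outside]
    by auto
  then show ?thesis by (force simp: bounded_pos)
qed

lemma integral_bump_pos: "integral {0..1} (bump k) > 0"
proof -
  have cont: "continuous_on {0..1} (bump k)"
    using continuous_on_bump_deriv[of 0 k] by (auto intro: continuous_on_subset)
  have nonneg: "bump k x \<ge> 0" for x
    by (auto simp: bump_def trunc_power_def)
  have "integral {0..1} (bump k) \<ge> 0"
    using cont nonneg by (intro integral_nonneg integrable_continuous_real) auto
  moreover have "bump k (1/2) > 0" by (simp add: bump_def trunc_power_def)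
  then have "integral {0..1} (bump k) \<noteq> 0"
    using integral_eq_0_iff[OF cont] nonneg by force
  ultimately show ?thesis by linarith
qed

lemma test_fnD:
  assumes "\<phi> \<in> test_fns"
  shows "continuous_on UNIV \<phi>" "\<forall>x. \<bar>\<phi> x\<bar> \<le> 1"
    "\<exists>a b. 0 < a \<and> a \<le> b \<and> b < 1 \<and> (\<forall>x. x \<notin> {a..b} \<longrightarrow> \<phi> x = 0)"
  using assms C1_differentiable_imp_continuous_on unfolding test_fns_def by auto

lemma zero_in_test_fns: "(\<lambda>_. 0) \<in> test_fns"
  unfolding test_fns_def by (auto intro!: exI[of _ "1/2"])

lemma dtv_nonneg: "dtv w v \<ge> 0"
proof -
  have "ereal (- (LINT x:I01|lborel. w x * deriv (\<lambda>_. 0) x) - (LINT x:I01|lborel. v x * 0)) \<le> dtv w v"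
    unfolding dtv_def by (rule SUP_upper) (rule zero_in_test_fns)
  then show ?thesis by (simp add: zero_ereal_def)
qed

definition scaled_test_fn :: "(real \<Rightarrow> real) \<Rightarrow> (real \<Rightarrow> real) \<Rightarrow> real \<Rightarrow> bool" where
  "scaled_test_fn f f' M \<longleftrightarrow> (\<forall>x. (f has_real_derivative f' x) (at x)) \<and> continuous_on UNIV f' \<and>
     (\<exists>a b. 0 < a \<and> a \<le> b \<and> b < 1 \<and> (\<forall>x. x \<notin> {a..b} \<longrightarrow> f x = 0)) \<and>
     (\<forall>x. \<bar>f x\<bar> \<le> M) \<and> M > 0"

lemma scaled_test_fn_divide:
  assumes "scaled_test_fn f f' M"
  shows "(\<lambda>x. f x / M) \<in> test_fns" "deriv (\<lambda>x. f x / M) = (\<lambda>x. f' x / M)"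
proof -
  obtain a b where M: "M > 0" and bound: "\<forall>x. \<bar>f x\<bar> \<le> M" and cont: "continuous_on UNIV f'"
    and supp: "0 < a" "a \<le> b" "b < 1" "\<forall>x. x \<notin> {a..b} \<longrightarrow> f x = 0"
    and d0: "\<forall>x. (f has_real_derivative f' x) (at x)"
    using assms unfolding scaled_test_fn_def by blast
  have d: "\<forall>x. ((\<lambda>x. f x / M) has_real_derivative f' x / M) (at x)"
    using d0 DERIV_cdivide by blast
  then show "deriv (\<lambda>x. f x / M) = (\<lambda>x. f' x / M)" using DERIV_imp_deriv by blast
  have "continuous_on UNIV (\<lambda>x. f' x / M)" using cont M by (intro continuous_intros) auto
  then have "(\<lambda>x. f x / M) C1_differentiable_on UNIV"
    unfolding C1_differentiable_on_def using d
    by (intro exI[of _ "\<lambda>x. f' x / M"]) (auto simp: has_real_derivative_iff_has_vector_derivative)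
  moreover have "\<forall>x. \<bar>f x / M\<bar> \<le> 1" using bound M by (simp add: abs_divide)
  moreover have "\<forall>x. x \<notin> {a..b} \<longrightarrow> f x / M = 0" using supp(4) by simp
  ultimately show "(\<lambda>x. f x / M) \<in> test_fns"
    unfolding test_fns_def using supp(1-3) by blast
qed

lemma scaled_test_fn_minus:
  assumes "scaled_test_fn f f' M" shows "scaled_test_fn (\<lambda>x. - f x) (\<lambda>x. - f' x) M"
  using assms unfolding scaled_test_fn_def by (auto intro: DERIV_minus continuous_on_minus)

lemma dtv_le_scaled_test_fn:
  assumes "scaled_test_fn f f' M" "dtv w v \<le> ereal d"
  shows "- (LINT x:I01|lborel. w x * f' x) - (LINT x:I01|lborel. v x * f x) \<le> M * d"
proof -
  have M: "M > 0" using assms(1) unfolding scaled_test_fn_def by auto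
  let ?\<phi> = "\<lambda>x. f x / M"
  have "ereal (- (LINT x:I01|lborel. w x * deriv ?\<phi> x) - (LINT x:I01|lborel. v x * ?\<phi> x)) \<le> dtv w v"
    unfolding dtv_def by (rule SUP_upper) (rule scaled_test_fn_divide(1)[OF assms(1)])
  also have "\<dots> \<le> ereal d" by fact
  finally have "(- (LINT x:I01|lborel. w x * f' x) - (LINT x:I01|lborel. v x * f x)) / M \<le> d"
    using scaled_test_fn_divide(2)[OF assms(1)] by (simp add: diff_divide_distrib set_lebesgue_integral_def)
  then show ?thesis using M by (simp add: divide_le_eq mult.commute)
qed

lemma primitive_vanishes_outside:
  fixes g :: "real \<Rightarrow> real"
  assumes cont: "continuous_on UNIV g"
    and supp: "0 < a" "a \<le> b" "b < 1" "\<forall>x. x \<notin> {a..b} \<longrightarrow> g x = 0"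
    and mean: "integral {0..1} g = 0" and x: "x \<notin> {a..b}"
  shows "integral {0..x} g = 0"
proof -
  have int: "g integrable_on {p..q}" for p q
    using cont by (blast intro: integrable_continuous_interval continuous_on_subset)
  have zero: "integral {p..q} g = 0" if "{p..q} \<inter> {a..b} = {}" for p q
    using that supp(4) by (subst integral_cong[where g="\<lambda>_. 0"]) auto
  have "x < a \<or> b < x" using x by auto
  then consider "x < a" | "b < x" "x < 1" | "1 \<le> x" by linarith
  then show ?thesis
  proof cases
    case 1
    then show ?thesis by (intro zero) auto
  next
    case 2
    then have "integral {0..1} g = integral {0..x} g + integral {x..1} g"
      using supp int by (intro Henstock_Kurzweil_Integration.integral_combine[symmetric]) auto
    then show ?thesis using 2 mean zero[of x 1] by auto
  next
    case 3
    then have "integral {0..x} g = integral {0..1} g + integral {1..x} g"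
      using int by (intro Henstock_Kurzweil_Integration.integral_combine[symmetric]) auto
    then show ?thesis using 3 mean zero[of 1 x] supp by auto
  qed
qed

lemma primitive_scaled_test_fn:
  fixes g :: "real \<Rightarrow> real"
  assumes cont: "continuous_on UNIV g"
    and supp: "0 < a" "a \<le> b" "b < 1" "\<forall>x. x \<notin> {a..b} \<longrightarrow> g x = 0"
    and mean: "integral {0..1} g = 0" and bound: "\<forall>x. \<bar>g x\<bar> \<le> G" and G: "G > 0"
  shows "scaled_test_fn (\<lambda>x. integral {0..x} g) g G"
proof -
  define \<psi> where "\<psi> x = integral {0..x} g" for x
  have vanish: "\<psi> x = 0" if "x \<notin> {a..b}" for x
    unfolding \<psi>_def using primitive_vanishes_outside[OF cont supp mean that] .
  have deriv: "(\<psi> has_real_derivative g x) (at x)" for x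
  proof (cases "x > 0")
    case True
    have "(\<psi> has_vector_derivative g x) (at x within {0..x + 1})"
      unfolding \<psi>_def using True cont
      by (intro integral_has_vector_derivative) (auto intro: continuous_on_subset)
    moreover have "at x within {0..x + 1} = at x" using True by (intro at_within_Icc_at) auto
    ultimately show ?thesis by (simp add: has_real_derivative_iff_has_vector_derivative)
  next
    case False
    then have "x < a" using supp by linarith
    have "(\<psi> has_real_derivative 0) (at x)"
      by (rule has_field_derivative_transform_within_open[of "\<lambda>_. 0" _ _ "{..<a}"])
         (use \<open>x < a\<close> vanish in auto)
    then show ?thesis using supp(4) \<open>x < a\<close> by simp
  qed
  have "\<bar>\<psi> x\<bar> \<le> G" for x
  proof (cases "x \<in> {a..b}")
    case True
    have "norm (integral {0..x} g) \<le> G * (x - 0)"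
      using True supp bound cont
      by (intro integral_bound) (auto intro: continuous_on_subset integrable_continuous_interval)
    also have "\<dots> \<le> G" using True supp G by simp
    finally show ?thesis unfolding \<psi>_def by simp
  qed (use vanish G in simp)
  then show ?thesis
    unfolding scaled_test_fn_def \<psi>_def[symmetric] using deriv cont G vanish supp by blast
qed

lemma test_fn_decomposition:
  "\<exists>M>0. \<exists>C>0. \<forall>\<phi>\<in>test_fns. \<exists>c \<psi>. \<bar>c\<bar> \<le> C \<and> scaled_test_fn \<psi> (\<lambda>x. \<phi> x - c * bump k x) M"
proof -
  define I where "I = integral {0..1} (bump k)"
  have I: "I > 0" unfolding I_def by (rule integral_bump_pos)
  obtain K where K: "K > 0" "\<forall>x. \<bar>bump k x\<bar> \<le> K"
    using bump_derivs_bounded[of k] by (metis bump_deriv_0 le0)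
  have bump_cont: "continuous_on UNIV (bump k)"
    using continuous_on_bump_deriv[of 0 k] by simp
  have "\<exists>c \<psi>. \<bar>c\<bar> \<le> 1 / I \<and> scaled_test_fn \<psi> (\<lambda>x. \<phi> x - c * bump k x) (1 + K / I)"
    if \<phi>: "\<phi> \<in> test_fns" for \<phi>
  proof -
    note \<phi>_props = test_fnD[OF \<phi>]
    obtain a b where ab: "0 < a" "a \<le> b" "b < 1" "\<forall>x. x \<notin> {a..b} \<longrightarrow> \<phi> x = 0"
      using \<phi>_props(3) by auto
    define c where "c = integral {0..1} \<phi> / I"
    have "norm (integral {0..1} \<phi>) \<le> 1 * (1 - 0)"
      using \<phi>_props(1,2) by (intro integral_bound) (auto intro: continuous_on_subset)
    then have c: "\<bar>c\<bar> \<le> 1 / I" using I by (simp add: c_def divide_right_mono abs_divide)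
    define g where "g x = \<phi> x - c * bump k x" for x
    have "integral {0..1} g = integral {0..1} \<phi> - c * I"
      unfolding g_def I_def using \<phi>_props(1) bump_cont
      by (subst integral_diff) (auto intro!: integrable_continuous_interval continuous_intros
          intro: continuous_on_subset)
    then have mean: "integral {0..1} g = 0" using I by (simp add: c_def)
    have "\<bar>g x\<bar> \<le> 1 + K / I" for x
    proof -
      have "\<bar>g x\<bar> \<le> \<bar>\<phi> x\<bar> + \<bar>c\<bar> * \<bar>bump k x\<bar>"
        unfolding g_def by (simp add: abs_mult[symmetric] abs_triangle_ineq4)
      also have "\<dots> \<le> 1 + 1 / I * K" using \<phi>_props(2) c K I by (intro add_mono mult_mono) auto
      finally show ?thesis by simp
    qed
    moreover have "\<forall>x. x \<notin> {min a (1/4)..max b (3/4)} \<longrightarrow> g x = 0"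
    proof (intro allI impI)
      fix x assume "x \<notin> {min a (1/4)..max b (3/4)}"
      then have "x \<notin> {a..b}" "x \<notin> {1/4..3/4}" by auto
      then show "g x = 0" using ab(4) bump_vanishes_outside[of k] by (simp add: g_def)
    qed
    ultimately have "scaled_test_fn (\<lambda>x. integral {0..x} g) g (1 + K / I)"
      using ab I K \<phi>_props(1) bump_cont mean
      by (intro primitive_scaled_test_fn[where a="min a (1/4)" and b="max b (3/4)"])
        (auto simp: g_def intro!: continuous_intros add_pos_pos)
    then show ?thesis using c unfolding g_def by blast
  qed
  moreover have "1 + K / I > 0" "1 / I > 0" using I K by (auto intro: add_pos_pos)
  ultimately show ?thesis by blast
qed

lemma I01_sets [measurable]: "I01 \<in> sets lborel"
  unfolding I01_def by simp

lemma I01_borel [measurable]: "I01 \<in> sets borel"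
  unfolding I01_def by simp

lemma emeasure_I01: "emeasure lborel I01 = 1"
  unfolding I01_def by simp

lemma L1_on_const: "L1_on (\<lambda>_. c)"
  unfolding L1_on_def set_integrable_def
  using emeasure_I01 by (intro integrable_scaleR_left integrable_real_indicator) auto

lemma LINT_I01_const: "(LINT x:I01|lborel. c) = (c::real)"
  using set_integral_const[of I01 lborel c] emeasure_I01 by (simp add: measure_def)

lemma L1_norm_nonneg: "L1_norm w \<ge> 0"
  unfolding L1_norm_def set_lebesgue_integral_def
  by (rule integral_nonneg_AE) (auto simp: indicator_def)

lemma L1_on_mult_bounded:
  assumes "L1_on w" "continuous_on UNIV f" "\<forall>x. \<bar>f x\<bar> \<le> K"
  shows "set_integrable lborel I01 (\<lambda>x. w x * f x)"
proof -
  have "K \<ge> 0" using assms(3) by (meson abs_ge_zero order.trans)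
  have "(\<lambda>x. indicator I01 x *\<^sub>R w x) \<in> borel_measurable lborel"
    using assms(1) unfolding L1_on_def set_integrable_def by (rule borel_measurable_integrable)
  moreover have "f \<in> borel_measurable lborel"
    using borel_measurable_continuous_onI[OF assms(2)] by simp
  ultimately have "(\<lambda>x. (indicator I01 x *\<^sub>R w x) * f x) \<in> borel_measurable lborel"
    by measurable
  then have "set_borel_measurable lborel I01 (\<lambda>x. w x * f x)"
    unfolding set_borel_measurable_def by (simp add: mult.assoc)
  moreover have "set_integrable lborel I01 (\<lambda>x. K * w x)"
    using assms(1) unfolding L1_on_def by simp
  moreover have "norm (w x * f x) \<le> norm (K * w x)" for x
    using assms(3) \<open>K \<ge> 0\<close> by (simp add: abs_mult mult.commute mult_right_mono)
  ultimately show ?thesis by (metis (no_types, lifting) AE_I2 set_integrable_bound)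
qed

lemma abs_LINT_mult_bounded_le:
  assumes "L1_on w" "continuous_on UNIV f" "\<forall>x. \<bar>f x\<bar> \<le> K"
  shows "\<bar>LINT x:I01|lborel. w x * f x\<bar> \<le> K * L1_norm w"
proof -
  have "\<bar>LINT x:I01|lborel. w x * f x\<bar> \<le> (LINT x:I01|lborel. \<bar>w x * f x\<bar>)"
    using set_integral_norm_bound[OF L1_on_mult_bounded[OF assms]] by simp
  also have "\<dots> \<le> (LINT x:I01|lborel. K * \<bar>w x\<bar>)"
    using assms L1_on_mult_bounded[OF assms] set_integrable_abs[of lborel I01 w]
    by (intro set_integral_mono)
      (auto simp: L1_on_def abs_mult mult.commute mult_right_mono dest: set_integrable_abs)
  also have "\<dots> = K * L1_norm w" by (simp add: L1_norm_def)
  finally show ?thesis .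
qed

fun chain_const :: "real \<Rightarrow> real \<Rightarrow> real \<Rightarrow> nat \<Rightarrow> nat \<Rightarrow> real" where
  "chain_const M C K k 0 = 1"
| "chain_const M C K k (Suc n) = M * (1 + chain_const M C K k n) + C * K * real (Suc k)"

lemma chain_const_pos:
  assumes "M > 0" "C > 0" "K > 0"
  shows "chain_const M C K k n > 0"
proof (induction n)
  case (Suc n)
  have "C * K * real (Suc k) > 0" using assms by simp
  then show ?case using Suc assms by (simp add: add_pos_pos)
qed simp

lemma set_integral_mult_minus: "(LINT x:A|M. (w x::real) * - f x) = - (LINT x:A|M. w x * f x)"
  by (simp add: set_lebesgue_integral_def)

lemma scaled_test_fn_bump_deriv:
  assumes "m < k" "K > 0" "\<forall>x. \<bar>bump_deriv k m x\<bar> \<le> K"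
  shows "scaled_test_fn (bump_deriv k m) (bump_deriv k (Suc m)) K"
proof -
  have "\<exists>a b. 0 < a \<and> a \<le> b \<and> b < 1 \<and> (\<forall>x. x \<notin> {a..b} \<longrightarrow> bump_deriv k m x = 0)"
    using bump_deriv_vanishes_outside[of k m] by (intro exI[of _ "1/4"] exI[of _ "3/4"]) simp
  then show ?thesis
    unfolding scaled_test_fn_def
    using assms bump_deriv_has_derivative continuous_on_bump_deriv[of "Suc m" k] by auto
qed

context
  fixes k :: nat and w :: "nat \<Rightarrow> real \<Rightarrow> real" and d :: "nat \<Rightarrow> real" and B :: real
  assumes k: "k \<ge> 1" and L1: "\<forall>i\<le>k. L1_on (w i)"
    and jumps: "\<forall>i<k. dtv (w i) (w (Suc i)) \<le> ereal (d i)"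
    and top: "\<forall>\<phi>\<in>test_fns. \<bar>LINT x:I01|lborel. w k x * \<phi> x\<bar> \<le> B"
begin

lemma chain_jump_nonneg: "i < k \<Longrightarrow> 0 \<le> d i"
  using jumps dtv_nonneg[of "w i" "w (Suc i)"] by (metis ereal_less_eq(5) order_trans)

lemma chain_top_bound_nonneg: "0 \<le> B"
  using top zero_in_test_fns by fastforce

lemma
  shows chain_size_ge_L1: "L1_norm (w 0) \<le> L1_norm (w 0) + sum d {..<k} + B"
    and chain_size_ge_top: "B \<le> L1_norm (w 0) + sum d {..<k} + B"
    and chain_size_ge_jump: "i < k \<Longrightarrow> d i \<le> L1_norm (w 0) + sum d {..<k} + B"
proof -
  have sum: "0 \<le> sum d {..<k}" "i < k \<Longrightarrow> d i \<le> sum d {..<k}"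
    using chain_jump_nonneg by (auto intro: sum_nonneg member_le_sum)
  then show "L1_norm (w 0) \<le> L1_norm (w 0) + sum d {..<k} + B"
    and "B \<le> L1_norm (w 0) + sum d {..<k} + B"
    and "i < k \<Longrightarrow> d i \<le> L1_norm (w 0) + sum d {..<k} + B"
    using chain_top_bound_nonneg L1_norm_nonneg[of "w 0"] by auto
qed

lemma chain_size_nonneg: "0 \<le> L1_norm (w 0) + sum d {..<k} + B"
  using chain_size_ge_L1 L1_norm_nonneg[of "w 0"] by linarith

text \<open>Each step down the chain trades one jump \<open>d j\<close> for one more derivative on the bump.\<close>
lemma abs_LINT_chain_bump_deriv_le:
  assumes K: "K > 0" "\<forall>m\<le>k. \<forall>x. \<bar>bump_deriv k m x\<bar> \<le> K"
  shows "j + m < k \<Longrightarrow> \<bar>LINT x:I01|lborel. w j x * bump_deriv k m x\<bar>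
            \<le> real (Suc j) * K * (L1_norm (w 0) + sum d {..<k} + B)"
proof (induction j arbitrary: m)
  case 0
  have "\<bar>LINT x:I01|lborel. w 0 x * bump_deriv k m x\<bar> \<le> K * L1_norm (w 0)"
    using L1 K 0 by (intro abs_LINT_mult_bounded_le continuous_on_bump_deriv) auto
  also have "\<dots> \<le> K * (L1_norm (w 0) + sum d {..<k} + B)"
    using K chain_size_ge_L1 by (intro mult_left_mono) auto
  finally show ?case by simp
next
  case (Suc j)
  have m: "m < k" "j < k" using Suc.prems by auto
  have test: "scaled_test_fn (bump_deriv k m) (bump_deriv k (Suc m)) K"
    using K m by (intro scaled_test_fn_bump_deriv) auto
  have jump: "dtv (w j) (w (Suc j)) \<le> ereal (d j)" using jumps m by auto
  note up = dtv_le_scaled_test_fn[OF test jump]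
    and down = dtv_le_scaled_test_fn[OF scaled_test_fn_minus[OF test] jump]
  have "\<bar>LINT x:I01|lborel. w j x * bump_deriv k (Suc m) x\<bar>
      \<le> real (Suc j) * K * (L1_norm (w 0) + sum d {..<k} + B)"
    using Suc.IH[of "Suc m"] Suc.prems by simp
  moreover have "K * d j \<le> K * (L1_norm (w 0) + sum d {..<k} + B)"
    using K chain_size_ge_jump[of j] m by (intro mult_left_mono) auto
  ultimately show ?case using up down unfolding set_integral_mult_minus by (simp add: algebra_simps abs_le_iff)
qed

text \<open>Splitting \<open>\<phi> = c * bump + \<psi>'\<close>, the \<open>\<psi>'\<close> part is moved one link up the chain at the
  price of the jump \<open>d j\<close>.\<close>
lemma abs_LINT_chain_decomposed_le:
  assumes j: "j < k" and \<phi>: "\<phi> \<in> test_fns"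
    and \<psi>: "scaled_test_fn \<psi> (\<lambda>x. \<phi> x - c * bump k x) M"
    and above: "\<forall>\<phi>\<in>test_fns. \<bar>LINT x:I01|lborel. w (Suc j) x * \<phi> x\<bar> \<le> Q"
  shows "\<bar>LINT x:I01|lborel. w j x * \<phi> x\<bar>
           \<le> M * (d j + Q) + \<bar>c\<bar> * \<bar>LINT x:I01|lborel. w j x * bump k x\<bar>"
proof -
  have M: "M > 0" using \<psi> by (simp add: scaled_test_fn_def)
  obtain K where bump_le: "\<forall>x. \<bar>bump k x\<bar> \<le> K"
    using bump_derivs_bounded[of k] by (metis bump_deriv_0 le0)
  have bump_cont: "continuous_on UNIV (bump k)" using continuous_on_bump_deriv[of 0 k] by simp
  have L1_j: "L1_on (w j)" using L1 j by auto
  have jump: "dtv (w j) (w (Suc j)) \<le> ereal (d j)" using jumps j by auto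
  note up = dtv_le_scaled_test_fn[OF \<psi> jump]
    and down = dtv_le_scaled_test_fn[OF scaled_test_fn_minus[OF \<psi>] jump]
  have "\<bar>LINT x:I01|lborel. w (Suc j) x * (\<psi> x / M)\<bar> \<le> Q"
    using bspec[OF above scaled_test_fn_divide(1)[OF \<psi>]] by simp
  then have \<psi>_part: "\<bar>LINT x:I01|lborel. w (Suc j) x * \<psi> x\<bar> \<le> M * Q"
    using M by (simp add: set_lebesgue_integral_def abs_divide divide_le_eq mult.commute)
  have "(LINT x:I01|lborel. w j x * (\<phi> x - c * bump k x))
      = (LINT x:I01|lborel. w j x * \<phi> x - c * (w j x * bump k x))"
    by (simp add: algebra_simps)
  also have "\<dots> = (LINT x:I01|lborel. w j x * \<phi> x) - c * (LINT x:I01|lborel. w j x * bump k x)"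
    using L1_on_mult_bounded[OF L1_j bump_cont bump_le] test_fnD(1,2)[OF \<phi>]
    by (subst set_integral_diff(2)) (auto intro: L1_on_mult_bounded[OF L1_j])
  finally have split: "(LINT x:I01|lborel. w j x * (\<phi> x - c * bump k x))
      = (LINT x:I01|lborel. w j x * \<phi> x) - c * (LINT x:I01|lborel. w j x * bump k x)" .
  have "\<bar>LINT x:I01|lborel. w j x * (\<phi> x - c * bump k x)\<bar> \<le> M * (d j + Q)"
    using up down \<psi>_part unfolding set_integral_mult_minus by (simp add: abs_le_iff algebra_simps)
  moreover have "\<bar>LINT x:I01|lborel. w j x * \<phi> x\<bar>
      \<le> \<bar>LINT x:I01|lborel. w j x * (\<phi> x - c * bump k x)\<bar> + \<bar>c\<bar> * \<bar>LINT x:I01|lborel. w j x * bump k x\<bar>"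
    using abs_triangle_ineq[of "(LINT x:I01|lborel. w j x * \<phi> x) - c * (LINT x:I01|lborel. w j x * bump k x)"
        "c * (LINT x:I01|lborel. w j x * bump k x)"]
    unfolding split by (simp add: abs_mult)
  ultimately show ?thesis by linarith
qed

lemma abs_LINT_chain_test_le:
  assumes M: "M > 0" and C: "C > 0"
    and K: "K > 0" "\<forall>m\<le>k. \<forall>x. \<bar>bump_deriv k m x\<bar> \<le> K"
    and decomp: "\<forall>\<phi>\<in>test_fns. \<exists>c \<psi>. \<bar>c\<bar> \<le> C \<and> scaled_test_fn \<psi> (\<lambda>x. \<phi> x - c * bump k x) M"
  shows "n < k \<Longrightarrow> \<forall>\<phi>\<in>test_fns. \<bar>LINT x:I01|lborel. w (k - n) x * \<phi> x\<bar>
            \<le> chain_const M C K k n * (L1_norm (w 0) + sum d {..<k} + B)"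
proof (induction n)
  case 0
  then show ?case using top chain_size_ge_top by (auto intro: order_trans)
next
  case (Suc n)
  define j where "j = k - Suc n"
  define X where "X = L1_norm (w 0) + sum d {..<k} + B"
  have j: "j < k" "Suc j = k - n" using Suc.prems by (auto simp: j_def)
  have X: "X \<ge> 0" "d j \<le> X" using chain_size_nonneg chain_size_ge_jump[OF j(1)] by (auto simp: X_def)
  have above: "\<forall>\<phi>\<in>test_fns. \<bar>LINT x:I01|lborel. w (Suc j) x * \<phi> x\<bar> \<le> chain_const M C K k n * X"
    using Suc j(2) by (simp add: X_def)
  show ?case
  proof
    fix \<phi> assume \<phi>: "\<phi> \<in> test_fns"
    obtain c \<psi> where c: "\<bar>c\<bar> \<le> C" and \<psi>: "scaled_test_fn \<psi> (\<lambda>x. \<phi> x - c * bump k x) M"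
      using decomp \<phi> by blast
    have "\<bar>c\<bar> * \<bar>LINT x:I01|lborel. w j x * bump k x\<bar> \<le> C * (real (Suc j) * K * X)"
      using c abs_LINT_chain_bump_deriv_le[OF K, of j 0] j by (intro mult_mono) (auto simp: X_def)
    also have "\<dots> \<le> C * (real (Suc k) * K * X)"
      using C K X j by (intro mult_left_mono mult_right_mono) auto
    finally have "\<bar>c\<bar> * \<bar>LINT x:I01|lborel. w j x * bump k x\<bar> \<le> C * K * real (Suc k) * X"
      by (simp add: algebra_simps)
    moreover have "M * (d j + chain_const M C K k n * X) \<le> M * (X + chain_const M C K k n * X)"
      using M X by simp
    ultimately have "\<bar>LINT x:I01|lborel. w j x * \<phi> x\<bar>
        \<le> M * (X + chain_const M C K k n * X) + C * K * real (Suc k) * X"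
      using abs_LINT_chain_decomposed_le[OF j(1) \<phi> \<psi> above] by linarith
    then show "\<bar>LINT x:I01|lborel. w (k - Suc n) x * \<phi> x\<bar>
        \<le> chain_const M C K k (Suc n) * (L1_norm (w 0) + sum d {..<k} + B)"
      by (simp add: j_def X_def algebra_simps)
  qed
qed

lemma dtv_chain_start_le:
  assumes "\<forall>\<phi>\<in>test_fns. \<bar>LINT x:I01|lborel. w 1 x * \<phi> x\<bar> \<le> Q * (L1_norm (w 0) + sum d {..<k} + B)"
  shows "dtv (w 0) (\<lambda>_. 0) \<le> ereal ((1 + Q) * (L1_norm (w 0) + sum d {..<k} + B))"
  unfolding dtv_def
proof (rule SUP_least)
  fix \<phi> assume \<phi>: "\<phi> \<in> test_fns"
  have "ereal (- (LINT x:I01|lborel. w 0 x * deriv \<phi> x) - (LINT x:I01|lborel. w 1 x * \<phi> x))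
      \<le> dtv (w 0) (w 1)"
    unfolding dtv_def using \<phi> by (intro SUP_upper) auto
  also have "\<dots> \<le> ereal (d 0)" using jumps k by auto
  finally have "- (LINT x:I01|lborel. w 0 x * deriv \<phi> x) - (LINT x:I01|lborel. w 1 x * \<phi> x) \<le> d 0"
    by simp
  then show "ereal (- (LINT x:I01|lborel. w 0 x * deriv \<phi> x) - (LINT x:I01|lborel. 0 * \<phi> x))
      \<le> ereal ((1 + Q) * (L1_norm (w 0) + sum d {..<k} + B))"
    using chain_size_ge_jump[of 0] k assms \<phi> by (force simp: algebra_simps)
qed

end

lemma dtv_chain_bound:
  assumes "k \<ge> 1"
  shows "\<exists>C>0. \<forall>w d B. (\<forall>i\<le>k. L1_on (w i)) \<longrightarrow> (\<forall>i<k. dtv (w i) (w (Suc i)) \<le> ereal (d i)) \<longrightarrow>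
     (\<forall>\<phi>\<in>test_fns. \<bar>LINT x:I01|lborel. w k x * \<phi> x\<bar> \<le> B) \<longrightarrow>
     dtv (w 0) (\<lambda>_. 0) \<le> ereal (C * (L1_norm (w 0) + sum d {..<k} + B))"
proof -
  obtain M C where MC: "M > 0" "C > 0"
    "\<forall>\<phi>\<in>test_fns. \<exists>c \<psi>. \<bar>c\<bar> \<le> C \<and> scaled_test_fn \<psi> (\<lambda>x. \<phi> x - c * bump k x) M"
    using test_fn_decomposition[of k] by blast
  obtain K where K: "K > 0" "\<forall>m\<le>k. \<forall>x. \<bar>bump_deriv k m x\<bar> \<le> K"
    using bump_derivs_bounded[of k] by blast
  have "dtv (w 0) (\<lambda>_. 0) \<le> ereal ((1 + chain_const M C K k (k - 1)) * (L1_norm (w 0) + sum d {..<k} + B))"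
    if "\<forall>i\<le>k. L1_on (w i)" "\<forall>i<k. dtv (w i) (w (Suc i)) \<le> ereal (d i)"
      "\<forall>\<phi>\<in>test_fns. \<bar>LINT x:I01|lborel. w k x * \<phi> x\<bar> \<le> B" for w d B
    using abs_LINT_chain_test_le[OF assms that MC(1,2) K MC(3), of "k - 1"] assms
    by (intro dtv_chain_start_le[OF assms that]) simp
  moreover have "1 + chain_const M C K k (k - 1) > 0"
    using chain_const_pos[OF MC(1,2) K(1)] by (simp add: add_pos_pos)
  ultimately show ?thesis by blast
qed

lemma le_powr_add_one:
  fixes a p :: real assumes "a \<ge> 0" "p \<ge> 1"
  shows "a \<le> a powr p + 1"
proof (cases "a \<le> 1")
  case False
  then have "a powr 1 \<le> a powr p" using assms by (intro powr_mono) auto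
  then show ?thesis using False by simp
qed (simp add: add_increasing)

lemma le_add_powr_scaled:
  fixes a p t :: real assumes "a \<ge> 0" "p \<ge> 1" "t > 0"
  shows "a \<le> t + t powr (1 - p) * a powr p"
proof (cases "a \<le> t")
  case False
  then have "a / t \<ge> 1" using assms by auto
  then have "(a / t) powr 1 \<le> (a / t) powr p" using assms by (intro powr_mono) auto
  then have "a / t \<le> a powr p / t powr p" using assms by (simp add: powr_divide)
  then have "a \<le> t * a powr p / t powr p" using assms by (simp add: field_simps)
  moreover have "t * a powr p / t powr p = t powr (1 - p) * a powr p"
    using assms by (simp add: powr_diff)
  ultimately show ?thesis using assms by simp
qed (simp add: add_increasing2)

lemma in_Wsp_imp_L1_on:
  assumes p: "p > 1" and W: "in_Wsp s p v"
  shows "L1_on v"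
proof -
  have [measurable]: "v \<in> borel_measurable lborel" using W by (simp add: in_Wsp_def)
  have "(\<integral>\<^sup>+x. ennreal (norm (indicator I01 x *\<^sub>R v x)) \<partial>lborel)
      \<le> (\<integral>\<^sup>+x. ennreal (\<bar>v x\<bar> powr p) * indicator I01 x + indicator I01 x \<partial>lborel)"
  proof (rule nn_integral_mono)
    fix x
    have "ennreal \<bar>v x\<bar> \<le> ennreal (\<bar>v x\<bar> powr p + 1)"
      using le_powr_add_one[of "\<bar>v x\<bar>" p] p by (intro ennreal_leI) simp
    then show "ennreal (norm (indicator I01 x *\<^sub>R v x)) \<le> ennreal (\<bar>v x\<bar> powr p) * indicator I01 x + indicator I01 x"
      by (cases "x \<in> I01") (simp_all add: ennreal_plus)
  qed
  also have "\<dots> = (\<integral>\<^sup>+x\<in>I01. ennreal (\<bar>v x\<bar> powr p) \<partial>lborel) + (\<integral>\<^sup>+x. indicator I01 x \<partial>lborel)"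
    by (rule nn_integral_add) auto
  also have "\<dots> < \<infinity>" using W emeasure_I01 by (simp add: in_Wsp_def)
  finally have "integrable lborel (\<lambda>x. indicator I01 x *\<^sub>R v x)"
    by (intro integrableI_bounded) auto
  then show ?thesis unfolding L1_on_def set_integrable_def .
qed

lemma ennreal_LINT_I01_eq_nn_integral:
  assumes "set_integrable lborel I01 f" "\<forall>x. f x \<ge> 0"
  shows "ennreal (LINT x:I01|lborel. f x) = (\<integral>\<^sup>+x\<in>I01. ennreal (f x) \<partial>lborel)"
proof -
  have "(\<integral>\<^sup>+x. ennreal (indicator I01 x *\<^sub>R f x) \<partial>lborel) = (LINT x:I01|lborel. f x)"
    unfolding set_lebesgue_integral_def
    by (rule nn_integral_eq_integral) (use assms in \<open>auto simp: set_integrable_def indicator_def\<close>)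
  moreover have "(\<lambda>x. ennreal (indicator I01 x *\<^sub>R f x)) = (\<lambda>x. ennreal (f x) * indicator I01 x)"
    by (auto simp: indicator_def)
  ultimately show ?thesis by simp
qed

definition gagliardo_kernel :: "real \<Rightarrow> real \<Rightarrow> (real \<Rightarrow> real) \<Rightarrow> real \<Rightarrow> real \<Rightarrow> real" where
  "gagliardo_kernel s p v x y = \<bar>v x - v y\<bar> powr p / \<bar>x - y\<bar> powr (1 + s * p)"

lemma gagliardo_kernel_nonneg: "0 \<le> gagliardo_kernel s p v x y"
  by (simp add: gagliardo_kernel_def)

text \<open>On the unit interval \<open>\<bar>x - y\<bar> < 1\<close>, so the kernel dominates \<open>\<bar>v x - v y\<bar> powr p\<close>.\<close>
lemma abs_diff_le_gagliardo_kernel: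
  assumes "x \<in> I01" "y \<in> I01" "p \<ge> 1" "s > 0" "t > 0"
  shows "\<bar>v x - v y\<bar> \<le> t + t powr (1 - p) * gagliardo_kernel s p v x y"
proof (cases "x = y")
  case False
  have "\<bar>x - y\<bar> < 1" using assms by (auto simp: I01_def)
  moreover have "1 + s * p > 0" using assms by (simp add: add_pos_pos)
  ultimately have "\<bar>x - y\<bar> powr (1 + s * p) \<le> 1" using powr_le1 by force
  moreover have "\<bar>x - y\<bar> powr (1 + s * p) > 0" using False by simp
  ultimately have "\<bar>v x - v y\<bar> powr p \<le> gagliardo_kernel s p v x y"
    unfolding gagliardo_kernel_def by (simp add: le_divide_eq mult_left_le)
  then show ?thesis
    using le_add_powr_scaled[of "\<bar>v x - v y\<bar>" p t] assms
    by (smt (verit) mult_left_mono powr_ge_zero)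
qed (use assms in \<open>simp add: gagliardo_kernel_def\<close>)

lemma abs_minus_mean_le_kernel_integral:
  assumes p: "p > 1" and s: "s > 0" and W: "in_Wsp s p v" and t: "t > 0" and x: "x \<in> I01"
  shows "ennreal \<bar>v x - (LINT y:I01|lborel. v y)\<bar>
           \<le> ennreal t + ennreal (t powr (1 - p)) * (\<integral>\<^sup>+y\<in>I01. ennreal (gagliardo_kernel s p v x y) \<partial>lborel)"
proof -
  have [measurable]: "v \<in> borel_measurable lborel" using W by (simp add: in_Wsp_def)
  have v: "set_integrable lborel I01 v" using in_Wsp_imp_L1_on[OF p W] by (simp add: L1_on_def)
  have const: "set_integrable lborel I01 (\<lambda>_. v x)"
    using L1_on_const by (simp add: L1_on_def)
  define T where "T = t powr (1 - p)"
  have diff: "set_integrable lborel I01 (\<lambda>y. v x - v y)"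
    using set_integral_diff(1)[OF const v] .
  have "v x - (LINT y:I01|lborel. v y) = (LINT y:I01|lborel. v x - v y)"
    using set_integral_diff(2)[OF const v] by (simp add: LINT_I01_const)
  then have "ennreal \<bar>v x - (LINT y:I01|lborel. v y)\<bar> \<le> ennreal (LINT y:I01|lborel. \<bar>v x - v y\<bar>)"
    using set_integral_norm_bound[OF diff] by (intro ennreal_leI) simp
  also have "\<dots> = (\<integral>\<^sup>+y\<in>I01. ennreal \<bar>v x - v y\<bar> \<partial>lborel)"
    by (rule ennreal_LINT_I01_eq_nn_integral) (use set_integrable_abs[OF diff] in auto)
  also have "\<dots> \<le> (\<integral>\<^sup>+y. ennreal t * indicator I01 y
                      + ennreal T * (ennreal (gagliardo_kernel s p v x y) * indicator I01 y) \<partial>lborel)"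
  proof (rule nn_integral_mono)
    fix y
    have "ennreal \<bar>v x - v y\<bar> \<le> ennreal t + ennreal T * ennreal (gagliardo_kernel s p v x y)"
      if y: "y \<in> I01"
    proof -
      have "ennreal \<bar>v x - v y\<bar> \<le> ennreal (t + T * gagliardo_kernel s p v x y)"
        using abs_diff_le_gagliardo_kernel[OF x y _ s t, of p v] p by (intro ennreal_leI) (simp add: T_def)
      also have "\<dots> = ennreal t + ennreal T * ennreal (gagliardo_kernel s p v x y)"
        using t gagliardo_kernel_nonneg by (simp add: T_def ennreal_plus ennreal_mult)
      finally show ?thesis .
    qed
    then show "ennreal \<bar>v x - v y\<bar> * indicator I01 y
        \<le> ennreal t * indicator I01 y + ennreal T * (ennreal (gagliardo_kernel s p v x y) * indicator I01 y)"
      by (cases "y \<in> I01") simp_all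
  qed
  also have "\<dots> = ennreal t + ennreal T * (\<integral>\<^sup>+y\<in>I01. ennreal (gagliardo_kernel s p v x y) \<partial>lborel)"
    using emeasure_I01 by (subst nn_integral_add) (auto simp: nn_integral_cmult gagliardo_kernel_def)
  finally show ?thesis by (simp add: T_def)
qed

lemma L1_norm_minus_mean_le:
  assumes p: "p > 1" and s: "s > 0" and W: "in_Wsp s p v" and t: "t > 0"
  shows "L1_norm (\<lambda>x. v x - (LINT y:I01|lborel. v y))
           \<le> t + t powr (1 - p) * enn2real (gagliardo s p v)"
proof -
  have [measurable]: "v \<in> borel_measurable lborel" using W by (simp add: in_Wsp_def)
  have v: "set_integrable lborel I01 v" using in_Wsp_imp_L1_on[OF p W] by (simp add: L1_on_def)
  define m where "m = (LINT y:I01|lborel. v y)"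
  define T where "T = t powr (1 - p)"
  define H where "H x = (\<integral>\<^sup>+y\<in>I01. ennreal (gagliardo_kernel s p v x y) \<partial>lborel)" for x
  have [measurable]: "H \<in> borel_measurable lborel"
    unfolding H_def gagliardo_kernel_def by measurable
  have "ennreal (L1_norm (\<lambda>x. v x - m)) = (\<integral>\<^sup>+x\<in>I01. ennreal \<bar>v x - m\<bar> \<partial>lborel)"
    unfolding L1_norm_def using set_integral_diff(1)[OF v L1_on_const[of m, unfolded L1_on_def]]
    by (intro ennreal_LINT_I01_eq_nn_integral) (auto dest: set_integrable_abs)
  also have "\<dots> \<le> (\<integral>\<^sup>+x. ennreal t * indicator I01 x + ennreal T * (H x * indicator I01 x) \<partial>lborel)"
    using abs_minus_mean_le_kernel_integral[OF p s W t]
    by (intro nn_integral_mono) (auto simp: indicator_def m_def T_def H_def)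
  also have "\<dots> = ennreal t + ennreal T * gagliardo s p v"
    using emeasure_I01 by (subst nn_integral_add)
      (auto simp: nn_integral_cmult H_def gagliardo_def gagliardo_kernel_def)
  also have "\<dots> = ennreal (t + T * enn2real (gagliardo s p v))"
    using W t by (simp add: in_Wsp_def T_def ennreal_plus ennreal_mult ennreal_enn2real less_top)
  finally show ?thesis
    using t by (subst (asm) ennreal_le_iff) (auto simp: m_def T_def)
qed

text \<open>Optimising over \<open>t\<close> (the choice \<open>t = G powr (1 / p)\<close>) gives the fractional
  Poincare inequality.\<close>
lemma fractional_poincare:
  assumes p: "p > 1" and s: "s > 0" and W: "in_Wsp s p v"
  shows "L1_norm (\<lambda>x. v x - (LINT y:I01|lborel. v y)) \<le> 2 * enn2real (gagliardo s p v) powr (1 / p)"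
proof -
  define L where "L = L1_norm (\<lambda>x. v x - (LINT y:I01|lborel. v y))"
  define G where "G = enn2real (gagliardo s p v)"
  have bound: "L \<le> t + t powr (1 - p) * G" if "t > 0" for t
    unfolding L_def G_def using L1_norm_minus_mean_le[OF p s W that] .
  show ?thesis
  proof (cases "G = 0")
    case True
    have "L \<le> 0"
    proof (rule ccontr)
      assume "\<not> L \<le> 0"
      then show False using bound[of "L / 2"] True by simp
    qed
    then show ?thesis using True by (simp add: L_def G_def)
  next
    case False
    moreover have "G \<ge> 0" by (simp add: G_def)
    ultimately have G: "G > 0" by linarith
    define t where "t = G powr (1 / p)"
    have "t powr (1 - p) * G = G powr (1 / p * (1 - p) + 1)"
      using G by (simp add: t_def powr_powr powr_add)
    also have "1 / p * (1 - p) + 1 = 1 / p" using p by (simp add: field_simps)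
    finally have "t powr (1 - p) * G = t" by (simp add: t_def)
    then show ?thesis using bound[of t] G by (simp add: L_def t_def G_def)
  qed
qed

lemma abs_LINT_test_le_gagliardo:
  assumes p: "p > 1" and s: "s > 0" and W: "in_Wsp s p v" and \<phi>: "\<phi> \<in> test_fns"
  shows "\<bar>LINT x:I01|lborel. v x * \<phi> x\<bar>
           \<le> 2 * enn2real (gagliardo s p v) powr (1 / p) + \<bar>LINT y:I01|lborel. v y\<bar>"
proof -
  define m where "m = (LINT y:I01|lborel. v y)"
  note \<phi>_props = test_fnD(1,2)[OF \<phi>]
  have L1_diff: "L1_on (\<lambda>x. v x - m)"
    using in_Wsp_imp_L1_on[OF p W] L1_on_const[of m] unfolding L1_on_def by (rule set_integral_diff(1))
  have "(LINT x:I01|lborel. v x * \<phi> x) = (LINT x:I01|lborel. (v x - m) * \<phi> x + m * \<phi> x)"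
    by (simp add: algebra_simps)
  also have "\<dots> = (LINT x:I01|lborel. (v x - m) * \<phi> x) + m * (LINT x:I01|lborel. 1 * \<phi> x)"
    using L1_on_mult_bounded[OF L1_diff \<phi>_props] L1_on_mult_bounded[OF L1_on_const[of 1] \<phi>_props]
    by (subst set_integral_add(2)) auto
  finally have split: "(LINT x:I01|lborel. v x * \<phi> x)
      = (LINT x:I01|lborel. (v x - m) * \<phi> x) + m * (LINT x:I01|lborel. 1 * \<phi> x)" .
  have "\<bar>LINT x:I01|lborel. (v x - m) * \<phi> x\<bar> \<le> 2 * enn2real (gagliardo s p v) powr (1 / p)"
    using abs_LINT_mult_bounded_le[OF L1_diff \<phi>_props] fractional_poincare[OF p s W]
    by (simp add: m_def)
  moreover have "\<bar>LINT x:I01|lborel. 1 * \<phi> x\<bar> \<le> 1"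
    using abs_LINT_mult_bounded_le[OF L1_on_const[of 1] \<phi>_props] by (simp add: L1_norm_def LINT_I01_const)
  then have "\<bar>m * (LINT x:I01|lborel. 1 * \<phi> x)\<bar> \<le> \<bar>m\<bar>"
    by (simp add: abs_mult mult_left_le)
  ultimately show ?thesis using split by (simp add: m_def[symmetric])
qed

lemma ereal_cmult_INF:
  fixes F :: "'a \<Rightarrow> ereal"
  assumes "C > 0" "S \<noteq> {}"
  shows "ereal C * (INF v\<in>S. F v) = (INF v\<in>S. ereal C * F v)"
proof -
  have "isCont (\<lambda>x::ereal. ereal C * x) x" for x
    using tendsto_cmult_ereal[of "ereal C" "\<lambda>x. x"] by (simp add: isCont_def)
  then have "continuous (at_right (INF v\<in>S. F v)) (\<lambda>x::ereal. ereal C * x)"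
    using continuous_at_imp_continuous_at_within by blast
  then show ?thesis
    by (subst continuous_at_Inf_mono[where f="\<lambda>x. ereal C * x"])
       (use assms in \<open>auto simp: mono_def ereal_mult_left_mono image_comp\<close>)
qed

lemma ereal_le_cmult_add_INF:
  fixes F :: "'a \<Rightarrow> ereal"
  assumes le: "\<And>v. v \<in> S \<Longrightarrow> D \<le> ereal C * (ereal a + F v)" and C: "C > 0"
    and nonneg: "\<And>v. v \<in> S \<Longrightarrow> 0 \<le> F v"
  shows "D \<le> ereal C * (ereal a + (INF v\<in>S. F v))"
proof (cases "S = {}")
  case True
  then show ?thesis using C by (simp add: top_ereal_def)
next
  case False
  have "D \<le> (INF v\<in>S. ereal C * (ereal a + F v))" using le by (rule INF_greatest)
  also have "\<dots> = ereal C * (INF v\<in>S. ereal a + F v)"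
    using False C by (simp add: ereal_cmult_INF)
  also have "(INF v\<in>S. ereal a + F v) = ereal a + (INF v\<in>S. F v)"
    using False nonneg by (intro INF_ereal_add_right) auto
  finally show ?thesis .
qed

definition dtv_chain_estimate :: "nat \<Rightarrow> (nat \<Rightarrow> real) \<Rightarrow> real \<Rightarrow> bool" where
  "dtv_chain_estimate k \<beta> C \<longleftrightarrow> (\<forall>w B. (\<forall>i\<le>k. L1_on (w i)) \<longrightarrow>
     (\<forall>\<phi>\<in>test_fns. \<bar>LINT x:I01|lborel. w k x * \<phi> x\<bar> \<le> B) \<longrightarrow>
     dtv (w 0) (\<lambda>_. 0)
       \<le> ereal C * (ereal (L1_norm (w 0) + B) + (\<Sum>i<k. ereal (\<beta> i) * dtv (w i) (w (Suc i)))))"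

lemma sum_le_weighted_sum:
  fixes \<beta> d :: "nat \<Rightarrow> real"
  assumes A: "A > 0" "\<forall>i<k. A \<le> \<beta> i" and d: "\<forall>i<k. 0 \<le> d i"
  shows "sum d {..<k} \<le> max 1 (1 / A) * (\<Sum>i<k. \<beta> i * d i)"
proof -
  have "A * sum d {..<k} \<le> (\<Sum>i<k. \<beta> i * d i)"
    unfolding sum_distrib_left using A d by (intro sum_mono mult_right_mono) auto
  then have "sum d {..<k} \<le> 1 / A * (\<Sum>i<k. \<beta> i * d i)"
    using A by (simp add: field_simps)
  also have "\<dots> \<le> max 1 (1 / A) * (\<Sum>i<k. \<beta> i * d i)"
  proof (intro mult_right_mono sum_nonneg)
    fix i assume "i \<in> {..<k}"
    then show "0 \<le> \<beta> i * d i" using A(1) A(2)[rule_format, of i] d by simp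
  qed simp
  finally show ?thesis .
qed

lemma dtv_chain_estimate_exists:
  assumes k: "k \<ge> 1" and \<beta>: "\<forall>i<k. \<beta> i > 0"
  shows "\<exists>C>0. dtv_chain_estimate k \<beta> C"
proof -
  obtain C0 where C0: "C0 > 0" "\<forall>w d B. (\<forall>i\<le>k. L1_on (w i)) \<longrightarrow> (\<forall>i<k. dtv (w i) (w (Suc i)) \<le> ereal (d i)) \<longrightarrow>
     (\<forall>\<phi>\<in>test_fns. \<bar>LINT x:I01|lborel. w k x * \<phi> x\<bar> \<le> B) \<longrightarrow>
     dtv (w 0) (\<lambda>_. 0) \<le> ereal (C0 * (L1_norm (w 0) + sum d {..<k} + B))"
    using dtv_chain_bound[OF k] by blast
  define A where "A = Min (\<beta> ` {..<k})"
  have A: "A > 0" "\<forall>i<k. A \<le> \<beta> i"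
    using \<beta> k by (auto simp: A_def Min_gr_iff lessThan_empty_iff)
  define C where "C = C0 * max 1 (1 / A)"
  have C: "C > 0" using C0 A by (simp add: C_def)
  have "dtv (w 0) (\<lambda>_. 0)
      \<le> ereal C * (ereal (L1_norm (w 0) + B) + (\<Sum>i<k. ereal (\<beta> i) * dtv (w i) (w (Suc i))))"
    if L1: "\<forall>i\<le>k. L1_on (w i)" and top: "\<forall>\<phi>\<in>test_fns. \<bar>LINT x:I01|lborel. w k x * \<phi> x\<bar> \<le> B" for w B
  proof (cases "\<exists>i<k. dtv (w i) (w (Suc i)) = \<infinity>")
    case True
    then obtain i where "i < k" "ereal (\<beta> i) * dtv (w i) (w (Suc i)) = \<infinity>"
      using \<beta> by (auto simp: less_imp_neq[symmetric])
    then have "(\<Sum>i<k. ereal (\<beta> i) * dtv (w i) (w (Suc i))) = \<infinity>"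
      using sum_Pinfty[of "\<lambda>i. ereal (\<beta> i) * dtv (w i) (w (Suc i))" "{..<k}"] by auto
    then show ?thesis using C by simp
  next
    case False
    define d where "d i = real_of_ereal (dtv (w i) (w (Suc i)))" for i
    have d: "dtv (w i) (w (Suc i)) = ereal (d i)" "0 \<le> d i" if "i < k" for i
      using False dtv_nonneg[of "w i" "w (Suc i)"] that
      by (auto simp: d_def ereal_real real_of_ereal_pos)
    have "dtv (w 0) (\<lambda>_. 0) \<le> ereal (C0 * (L1_norm (w 0) + sum d {..<k} + B))"
      using C0(2) L1 d(1) top by auto
    also have "C0 * (L1_norm (w 0) + sum d {..<k} + B) \<le> C * (L1_norm (w 0) + B + (\<Sum>i<k. \<beta> i * d i))"
    proof -
      have "L1_norm (w 0) + B \<le> max 1 (1 / A) * (L1_norm (w 0) + B)"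
        using L1_norm_nonneg[of "w 0"] top zero_in_test_fns mult_right_mono[of 1 "max 1 (1 / A)"]
        by fastforce
      moreover have "sum d {..<k} \<le> max 1 (1 / A) * (\<Sum>i<k. \<beta> i * d i)"
        using sum_le_weighted_sum[OF A] d(2) by blast
      ultimately have "L1_norm (w 0) + sum d {..<k} + B
          \<le> max 1 (1 / A) * (L1_norm (w 0) + B + (\<Sum>i<k. \<beta> i * d i))"
        unfolding distrib_left by linarith
      then show ?thesis using C0 by (simp add: C_def mult.assoc)
    qed
    finally show ?thesis using d(1) by simp
  qed
  with C show ?thesis unfolding dtv_chain_estimate_def by blast
qed

definition TGV_chain ::
    "nat \<Rightarrow> (real \<Rightarrow> real) \<Rightarrow> (nat \<Rightarrow> real \<Rightarrow> real) \<Rightarrow> (real \<Rightarrow> real) \<Rightarrow> nat \<Rightarrow> real \<Rightarrow> real" where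
  "TGV_chain k u v z i = (if i = 0 then u else if i < k then v (i - 1) else z)"

definition TGV_jumps ::
    "nat \<Rightarrow> (nat \<Rightarrow> real) \<Rightarrow> (real \<Rightarrow> real) \<Rightarrow> (nat \<Rightarrow> real \<Rightarrow> real) \<Rightarrow> (real \<Rightarrow> real) \<Rightarrow> ereal" where
  "TGV_jumps k \<beta> u v z =
     (\<Sum>i<k. ereal (\<beta> i) * dtv (if i = 0 then u else v (i - 1)) (if i = k - 1 then z else v i))"

lemma TGV_int_eq_INF:
  "TGV_int k \<beta> u = (INF v \<in> {v. \<forall>i<k-1. v i \<in> BV_set}. TGV_jumps k \<beta> u v (\<lambda>_. 0))"
  unfolding TGV_int_def TGV_jumps_def ..

lemma TGV_frac_eq_INF:
  "TGV_frac k s \<alpha> u = (INF v \<in> {v. (\<forall>i<k-1. v i \<in> BV_set) \<and> in_Wsp s (1 + s * (1 - s)) (v (k - 1))}.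
      TGV_jumps k \<alpha> u v (\<lambda>x. s * v (k - 1) x)
      + ereal (\<alpha> k * s * (1 - s)) * Wsp_semi s (1 + s * (1 - s)) (v (k - 1))
      + ereal (\<alpha> (k - 1) * s * (1 - s) * \<bar>LINT x:I01|lborel. v (k - 1) x\<bar>))"
  unfolding TGV_frac_def TGV_jumps_def ..

lemma TGV_jumps_eq_chain:
  assumes "k \<ge> 1"
  shows "TGV_jumps k \<beta> u v z
    = (\<Sum>i<k. ereal (\<beta> i) * dtv (TGV_chain k u v z i) (TGV_chain k u v z (Suc i)))"
  unfolding TGV_jumps_def using assms by (intro sum.cong) (auto simp: TGV_chain_def)

lemma TGV_jumps_nonneg: "\<forall>i<k. 0 \<le> \<beta> i \<Longrightarrow> 0 \<le> TGV_jumps k \<beta> u v z"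
  unfolding TGV_jumps_def by (intro sum_nonneg) (simp add: dtv_nonneg)

lemma dtv_zero_zero: "dtv (\<lambda>_. 0) (\<lambda>_. 0) = 0"
proof -
  have "test_fns \<noteq> {}" using zero_in_test_fns by blast
  then show ?thesis by (simp add: dtv_def zero_ereal_def)
qed

lemma TGV_jumps_zero_chain:
  assumes "k \<ge> 1"
  shows "TGV_jumps k \<beta> u (\<lambda>_ _. 0) (\<lambda>_. 0) = ereal (\<beta> 0) * dtv u (\<lambda>_. 0)"
proof -
  have "TGV_jumps k \<beta> u (\<lambda>_ _. 0) (\<lambda>_. 0)
      = (\<Sum>i\<in>{0}. ereal (\<beta> i) * dtv (if i = 0 then u else (\<lambda>_. 0)) (\<lambda>_. 0))"
    unfolding TGV_jumps_def using assms
    by (intro sum.mono_neutral_cong_right) (auto simp: dtv_zero_zero)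
  then show ?thesis by simp
qed

lemma TGV_int_le_dtv: "k \<ge> 1 \<Longrightarrow> TGV_int k \<beta> u \<le> ereal (\<beta> 0) * dtv u (\<lambda>_. 0)"
  unfolding TGV_int_eq_INF
  by (rule INF_lower2[of "\<lambda>_ _. 0"]) (auto simp: TGV_jumps_zero_chain BV_set_def L1_on_const dtv_zero_zero)

lemma TGV_frac_le_dtv: "k \<ge> 1 \<Longrightarrow> TGV_frac k s \<alpha> u \<le> ereal (\<alpha> 0) * dtv u (\<lambda>_. 0)"
  unfolding TGV_frac_eq_INF
  by (rule INF_lower2[of "\<lambda>_ _. 0"])
    (auto simp: TGV_jumps_zero_chain BV_set_def L1_on_const dtv_zero_zero in_Wsp_def gagliardo_def
      Wsp_semi_def)

lemma TGV_int_nonneg: "\<forall>i<k. \<beta> i > 0 \<Longrightarrow> 0 \<le> TGV_int k \<beta> u"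
  unfolding TGV_int_eq_INF by (intro INF_greatest TGV_jumps_nonneg) (auto simp: less_imp_le)

lemma TGV_frac_summand_nonneg:
  assumes "\<forall>i\<le>k. \<alpha> i > 0" "0 < s" "s < 1"
  shows "0 \<le> TGV_jumps k \<alpha> u v (\<lambda>x. s * v (k - 1) x)
      + ereal (\<alpha> k * s * (1 - s)) * Wsp_semi s (1 + s * (1 - s)) (v (k - 1))
      + ereal (\<alpha> (k - 1) * s * (1 - s) * \<bar>LINT x:I01|lborel. v (k - 1) x\<bar>)"
proof -
  have "0 \<le> TGV_jumps k \<alpha> u v (\<lambda>x. s * v (k - 1) x)"
    using assms by (intro TGV_jumps_nonneg) (auto simp: less_imp_le)
  moreover have "0 \<le> ereal (\<alpha> k * s * (1 - s)) * Wsp_semi s (1 + s * (1 - s)) (v (k - 1))"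
    using assms by (auto simp: Wsp_semi_def ereal_zero_le_0_iff)
  moreover have "0 \<le> \<alpha> (k - 1) * s * (1 - s) * \<bar>LINT x:I01|lborel. v (k - 1) x\<bar>"
    using assms(1)[rule_format, of "k - 1"] assms(2,3) by simp
  ultimately show ?thesis by (simp add: add_nonneg_nonneg)
qed

lemma TGV_frac_nonneg: "\<forall>i\<le>k. \<alpha> i > 0 \<Longrightarrow> 0 < s \<Longrightarrow> s < 1 \<Longrightarrow> 0 \<le> TGV_frac k s \<alpha> u"
  unfolding TGV_frac_eq_INF by (intro INF_greatest TGV_frac_summand_nonneg)

lemma dtv_le_TGV_jumps:
  assumes C: "dtv_chain_estimate k \<beta> C" and k: "k \<ge> 1"
    and L1: "\<forall>i\<le>k. L1_on (TGV_chain k u v z i)"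
    and top: "\<forall>\<phi>\<in>test_fns. \<bar>LINT x:I01|lborel. z x * \<phi> x\<bar> \<le> B"
  shows "dtv u (\<lambda>_. 0) \<le> ereal C * (ereal (L1_norm u + B) + TGV_jumps k \<beta> u v z)"
proof -
  have ends: "TGV_chain k u v z 0 = u" "TGV_chain k u v z k = z"
    using k by (simp_all add: TGV_chain_def)
  have "dtv (TGV_chain k u v z 0) (\<lambda>_. 0) \<le> ereal C * (ereal (L1_norm (TGV_chain k u v z 0) + B)
      + (\<Sum>i<k. ereal (\<beta> i) * dtv (TGV_chain k u v z i) (TGV_chain k u v z (Suc i))))"
    using C[unfolded dtv_chain_estimate_def, rule_format, of "TGV_chain k u v z" B] L1 top
    unfolding ends(2) by blast
  then show ?thesis unfolding TGV_jumps_eq_chain[OF k] ends(1) .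
qed

lemma dtv_le_TGV_int:
  assumes k: "k \<ge> 1" and \<beta>: "\<forall>i<k. \<beta> i > 0"
  shows "\<exists>C>0. \<forall>u. L1_on u \<longrightarrow> dtv u (\<lambda>_. 0) \<le> ereal C * (ereal (L1_norm u) + TGV_int k \<beta> u)"
proof -
  obtain C where C: "C > 0" "dtv_chain_estimate k \<beta> C"
    using dtv_chain_estimate_exists[OF k \<beta>] by blast
  have "dtv u (\<lambda>_. 0) \<le> ereal C * (ereal (L1_norm u) + TGV_int k \<beta> u)" if u: "L1_on u" for u
    unfolding TGV_int_eq_INF
  proof (rule ereal_le_cmult_add_INF)
    fix v assume "v \<in> {v. \<forall>i<k-1. v i \<in> BV_set}"
    then have "\<forall>i\<le>k. L1_on (TGV_chain k u v (\<lambda>_. 0) i)"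
      using u L1_on_const by (auto simp: TGV_chain_def BV_set_def)
    then show "dtv u (\<lambda>_. 0) \<le> ereal C * (ereal (L1_norm u) + TGV_jumps k \<beta> u v (\<lambda>_. 0))"
      using dtv_le_TGV_jumps[OF C(2) k, of u v "\<lambda>_. 0" 0] by simp
  qed (use C \<beta> in \<open>auto intro: TGV_jumps_nonneg simp: less_imp_le\<close>)
  with C show ?thesis by blast
qed

lemma ereal_add_le_cmult:
  fixes S :: ereal
  assumes "0 \<le> a" "0 \<le> S" "B \<le> K * e" "1 \<le> K"
  shows "ereal (a + B) + S \<le> ereal K * (ereal a + (S + ereal e))"
proof (cases S)
  case (real r)
  have "a + r \<le> K * (a + r)" using assms real by (simp add: mult_le_cancel_right1)
  then show ?thesis using real assms by (simp add: distrib_left)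
qed (use assms in auto)

lemma fractional_top_bound_le:
  fixes s G K a b m :: real
  assumes "0 < s" "0 \<le> G" "2 \<le> K * (1 - s) * a" "2 \<le> K * (1 - s) * b"
  shows "s * (2 * G + \<bar>m\<bar>) \<le> K * (a * s * (1 - s) * G + b * s * (1 - s) * \<bar>m\<bar>)"
proof -
  have "2 * G \<le> K * (1 - s) * a * G" using assms by (intro mult_right_mono) auto
  moreover have "\<bar>m\<bar> \<le> K * (1 - s) * b * \<bar>m\<bar>" using assms by (simp add: mult_le_cancel_right1)
  ultimately have "s * (2 * G + \<bar>m\<bar>) \<le> s * (K * (1 - s) * a * G + K * (1 - s) * b * \<bar>m\<bar>)"
    using assms by (intro mult_left_mono) auto
  then show ?thesis by (simp add: algebra_simps)
qed

text \<open>In the fractional case the top of the chain is \<open>s * v (k - 1)\<close>, which the fractional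
  Poincare inequality tests against its \<open>W^{s,p}\<close> seminorm and its mean; both are paid
  for by the last two terms of \<open>TGV_frac\<close>.\<close>
lemma dtv_le_TGV_frac_summand:
  assumes C: "dtv_chain_estimate k \<alpha> C" "C > 0" and k: "k \<ge> 1" and s: "0 < s" "s < 1"
    and \<alpha>: "\<forall>i\<le>k. \<alpha> i > 0" and K: "1 \<le> K" "\<forall>i\<le>k. 2 \<le> K * (1 - s) * \<alpha> i"
    and u: "L1_on u" and v: "\<forall>i<k-1. v i \<in> BV_set" and W: "in_Wsp s (1 + s * (1 - s)) (v (k - 1))"
  shows "dtv u (\<lambda>_. 0) \<le> ereal (C * K) * (ereal (L1_norm u) + (TGV_jumps k \<alpha> u v (\<lambda>x. s * v (k - 1) x)
        + ereal (\<alpha> k * s * (1 - s)) * Wsp_semi s (1 + s * (1 - s)) (v (k - 1))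
        + ereal (\<alpha> (k - 1) * s * (1 - s) * \<bar>LINT x:I01|lborel. v (k - 1) x\<bar>)))"
proof -
  define p where "p = 1 + s * (1 - s)"
  have p: "p > 1" using s by (simp add: p_def)
  have W: "in_Wsp s p (v (k - 1))" using W by (simp add: p_def)
  define G where "G = enn2real (gagliardo s p (v (k - 1))) powr (1 / p)"
  define m where "m = (LINT x:I01|lborel. v (k - 1) x)"
  have "\<forall>i\<le>k. L1_on (TGV_chain k u v (\<lambda>x. s * v (k - 1) x) i)"
    using u v in_Wsp_imp_L1_on[OF p W] by (auto simp: TGV_chain_def BV_set_def L1_on_def)
  moreover have "\<forall>\<phi>\<in>test_fns. \<bar>LINT x:I01|lborel. s * v (k - 1) x * \<phi> x\<bar> \<le> s * (2 * G + \<bar>m\<bar>)"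
    using abs_LINT_test_le_gagliardo[OF p s(1) W] s
    by (simp add: G_def m_def abs_mult mult.assoc mult_left_mono)
  ultimately have "dtv u (\<lambda>_. 0)
      \<le> ereal C * (ereal (L1_norm u + s * (2 * G + \<bar>m\<bar>)) + TGV_jumps k \<alpha> u v (\<lambda>x. s * v (k - 1) x))"
    by (rule dtv_le_TGV_jumps[OF C(1) k])
  also have "\<dots> \<le> ereal C * (ereal K * (ereal (L1_norm u) + (TGV_jumps k \<alpha> u v (\<lambda>x. s * v (k - 1) x)
      + ereal (\<alpha> k * s * (1 - s) * G + \<alpha> (k - 1) * s * (1 - s) * \<bar>m\<bar>))))"
  proof (intro ereal_mult_left_mono ereal_add_le_cmult)
    show "s * (2 * G + \<bar>m\<bar>) \<le> K * (\<alpha> k * s * (1 - s) * G + \<alpha> (k - 1) * s * (1 - s) * \<bar>m\<bar>)"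
      using K(2) s by (intro fractional_top_bound_le) (auto simp: G_def)
    show "0 \<le> TGV_jumps k \<alpha> u v (\<lambda>x. s * v (k - 1) x)"
      using \<alpha> by (intro TGV_jumps_nonneg) (simp add: less_imp_le)
  qed (use C(2) K(1) L1_norm_nonneg in auto)
  also have "\<dots> = ereal (C * K) * (ereal (L1_norm u) + (TGV_jumps k \<alpha> u v (\<lambda>x. s * v (k - 1) x)
      + ereal (\<alpha> k * s * (1 - s)) * Wsp_semi s (1 + s * (1 - s)) (v (k - 1))
      + ereal (\<alpha> (k - 1) * s * (1 - s) * \<bar>LINT x:I01|lborel. v (k - 1) x\<bar>)))"
  proof -
    have "Wsp_semi s (1 + s * (1 - s)) (v (k - 1)) = ereal G"
      using W by (auto simp: Wsp_semi_def in_Wsp_def G_def p_def)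
    moreover have "ereal C * (ereal K * X) = ereal (C * K) * X" for X
      by (metis mult.assoc times_ereal.simps(1))
    ultimately show ?thesis by (simp add: m_def add.assoc)
  qed
  finally show ?thesis .
qed

lemma dtv_le_TGV_frac:
  assumes k: "k \<ge> 1" and s: "0 < s" "s < 1" and \<alpha>: "\<forall>i\<le>k. \<alpha> i > 0"
  shows "\<exists>C>0. \<forall>u. L1_on u \<longrightarrow> dtv u (\<lambda>_. 0) \<le> ereal C * (ereal (L1_norm u) + TGV_frac k s \<alpha> u)"
proof -
  obtain C where C: "C > 0" "dtv_chain_estimate k \<alpha> C"
    using dtv_chain_estimate_exists[OF k, of \<alpha>] \<alpha> by auto
  define A where "A = Min (\<alpha> ` {..k})"
  have A: "A > 0" "\<forall>i\<le>k. A \<le> \<alpha> i" using \<alpha> by (auto simp: A_def Min_gr_iff)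
  define K where "K = max 1 (2 / ((1 - s) * A))"
  have "2 \<le> K * (1 - s) * \<alpha> i" if "i \<le> k" for i
  proof -
    have "2 / ((1 - s) * A) * ((1 - s) * A) \<le> K * ((1 - s) * \<alpha> i)"
      using A s that by (intro mult_mono) (auto simp: K_def)
    then show ?thesis using A s by (simp add: mult.assoc)
  qed
  then have K: "1 \<le> K" "\<forall>i\<le>k. 2 \<le> K * (1 - s) * \<alpha> i" by (simp_all add: K_def)
  have CK: "C * K > 0" using C K by simp
  have "dtv u (\<lambda>_. 0) \<le> ereal (C * K) * (ereal (L1_norm u) + TGV_frac k s \<alpha> u)" if "L1_on u" for u
    unfolding TGV_frac_eq_INF
  proof (rule ereal_le_cmult_add_INF)
    fix v assume "v \<in> {v. (\<forall>i<k-1. v i \<in> BV_set) \<and> in_Wsp s (1 + s * (1 - s)) (v (k - 1))}"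
    then show "dtv u (\<lambda>_. 0) \<le> ereal (C * K) * (ereal (L1_norm u) + (TGV_jumps k \<alpha> u v (\<lambda>x. s * v (k - 1) x)
        + ereal (\<alpha> k * s * (1 - s)) * Wsp_semi s (1 + s * (1 - s)) (v (k - 1))
        + ereal (\<alpha> (k - 1) * s * (1 - s) * \<bar>LINT x:I01|lborel. v (k - 1) x\<bar>)))"
      using dtv_le_TGV_frac_summand[OF C(2,1) k s \<alpha> K that] by blast
  qed (use CK TGV_frac_summand_nonneg[OF \<alpha> s] in simp_all)
  with CK show ?thesis by blast
qed

lemma equivalent_norms_ereal:
  fixes D T :: ereal
  assumes "0 \<le> a" "0 \<le> D" "0 \<le> T" and upper: "T \<le> ereal c * D"
    and lower: "D \<le> ereal C * (ereal a + T)" and K: "max 1 c \<le> K" "1 + C \<le> K" "0 \<le> C"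
  shows "ereal a + T \<le> ereal K * (ereal a + D)" "ereal a + D \<le> ereal K * (ereal a + T)"
    and "D < \<infinity> \<longleftrightarrow> T < \<infinity>"
proof -
  show "D < \<infinity> \<longleftrightarrow> T < \<infinity>"
    using assms by (cases D; cases T) auto
  show "ereal a + T \<le> ereal K * (ereal a + D)"
  proof (cases D)
    case (real d)
    then obtain t where t: "T = ereal t" using upper assms(3) by (cases T) auto
    have "a + t \<le> K * (a + d)"
      using assms K real t mult_right_mono[of 1 K a] mult_right_mono[of c K d] by (simp add: distrib_left)
    then show ?thesis using real t by simp
  qed (use assms K in auto)
  show "ereal a + D \<le> ereal K * (ereal a + T)"
  proof (cases T)
    case (real t)
    then obtain d where d: "D = ereal d" using lower assms(2) by (cases D) auto
    have "a + d \<le> (1 + C) * (a + t)" using assms real d by (simp add: algebra_simps)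
    also have "\<dots> \<le> K * (a + t)" using assms K real by (intro mult_right_mono) auto
    finally show ?thesis using real d by simp
  qed (use assms K in auto)
qed

theorem proposition3p7:
  fixes k :: nat and s :: real and \<beta> \<alpha> :: "nat \<Rightarrow> real"
  assumes "k \<ge> 1" and "0 < s" and "s < 1"
    and "\<forall>i<k. \<beta> i > 0" and "\<forall>i\<le>k. \<alpha> i > 0"
  shows "BV_set = BGV_int_set k \<beta> \<and> BV_set = BGV_frac_set k s \<alpha> \<and>
    (\<exists>C>0. \<forall>u\<in>BV_set.
        BGV_int_norm k \<beta> u \<le> ereal C * BV_norm u \<and> BV_norm u \<le> ereal C * BGV_int_norm k \<beta> u \<and>
        BGV_frac_norm k s \<alpha> u \<le> ereal C * BV_norm u \<and> BV_norm u \<le> ereal C * BGV_frac_norm k s \<alpha> u)"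
proof -
  obtain Ci where Ci: "Ci > 0"
    "\<And>u. L1_on u \<Longrightarrow> dtv u (\<lambda>_. 0) \<le> ereal Ci * (ereal (L1_norm u) + TGV_int k \<beta> u)"
    using dtv_le_TGV_int[OF assms(1,4)] by blast
  obtain Cf where Cf: "Cf > 0"
    "\<And>u. L1_on u \<Longrightarrow> dtv u (\<lambda>_. 0) \<le> ereal Cf * (ereal (L1_norm u) + TGV_frac k s \<alpha> u)"
    using dtv_le_TGV_frac[OF assms(1,2,3,5)] by blast
  define K where "K = max (max 1 (max (\<beta> 0) (\<alpha> 0))) (1 + max Ci Cf)"
  have K: "max 1 (\<beta> 0) \<le> K" "max 1 (\<alpha> 0) \<le> K" "1 + Ci \<le> K" "1 + Cf \<le> K" "K > 0"
    by (auto simp: K_def)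
  note int = equivalent_norms_ereal[OF L1_norm_nonneg dtv_nonneg TGV_int_nonneg[OF assms(4)]
      TGV_int_le_dtv[OF assms(1)] Ci(2) K(1) K(3)]
    and frac = equivalent_norms_ereal[OF L1_norm_nonneg dtv_nonneg TGV_frac_nonneg[OF assms(5,2,3)]
      TGV_frac_le_dtv[OF assms(1)] Cf(2) K(2) K(4)]
  have "BV_set = BGV_int_set k \<beta>" "BV_set = BGV_frac_set k s \<alpha>"
    using int(3) frac(3) Ci(1) Cf(1) by (auto simp: BV_set_def BGV_int_set_def BGV_frac_set_def)
  moreover have "\<forall>u\<in>BV_set.
      BGV_int_norm k \<beta> u \<le> ereal K * BV_norm u \<and> BV_norm u \<le> ereal K * BGV_int_norm k \<beta> u \<and>
      BGV_frac_norm k s \<alpha> u \<le> ereal K * BV_norm u \<and> BV_norm u \<le> ereal K * BGV_frac_norm k s \<alpha> u"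
    using int(1,2) frac(1,2) Ci(1) Cf(1)
    by (auto simp: BV_set_def BV_norm_def BGV_int_norm_def BGV_frac_norm_def)
  ultimately show ?thesis using K(5) by blast
qed

end
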